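(* For any matrices $A\ge 0$ and $B>0$ of the same size, $$\frac{A}{A+B}\le\frac{A}{B}$$ in the Löwner order.
   Context: For a matrix $X$ and a positive definite matrix $C>0$, the matrix quotient is defined as $\frac{X}{C}:=\int_0^\infty (\lambda+C)^{-1}X(\lambda+C)^{-1}\,d\lambda$. $X\le Y$ means $Y-X$ is positive semidefinite. *)

theory Defs
  imports "HOL-Analysis.Analysis"
begin

definition conj_transpose :: "complex^'n^'m \<Rightarrow> complex^'m^'n" where
  "conj_transpose A = (\<chi> i j. cnj (A $ j $ i))"

definition hermitian :: "complex^'n^'n \<Rightarrow> bool" where
  "hermitian A \<longleftrightarrow> conj_transpose A = A"

definition quad_form :: "complex^'n^'n \<Rightarrow> complex^'n \<Rightarrow> complex" where
  "quad_form A x = (\<Sum>i\<in>UNIV. cnj (x $ i) * (A *v x) $ i)"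

definition psd :: "complex^'n^'n \<Rightarrow> bool" where
  "psd A \<longleftrightarrow> hermitian A \<and> (\<forall>x. 0 \<le> Re (quad_form A x))"

definition pd :: "complex^'n^'n \<Rightarrow> bool" where
  "pd A \<longleftrightarrow> hermitian A \<and> (\<forall>x. x \<noteq> 0 \<longrightarrow> 0 < Re (quad_form A x))"

definition loewner_le :: "complex^'n^'n \<Rightarrow> complex^'n^'n \<Rightarrow> bool" where
  "loewner_le X Y \<longleftrightarrow> psd (Y - X)"

definition mat_quot :: "complex^'n^'n \<Rightarrow> complex^'n^'n \<Rightarrow> complex^'n^'n" where
  "mat_quot X C = integral {0::real..}
     (\<lambda>l. matrix_inv (mat (complex_of_real l) + C) ** X ** matrix_inv (mat (complex_of_real l) + C))"

end

theory Submission
  imports Defs "HOL-Real_Asymp.Real_Asymp"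
begin

text \<open>
  For \<open>\<lambda> \<ge> 0\<close> put \<open>C = \<lambda> + B\<close> and \<open>D = \<lambda> + A + B\<close>, so that \<open>D - C = A\<close>. Expanding the
  right-hand side shows
  \<open>C\<inverse> A C\<inverse> - D\<inverse> A D\<inverse> = (C\<inverse> - D\<inverse>) (C + D) (C\<inverse> - D\<inverse>)\<close>,
  a congruence of the positive semidefinite matrix \<open>C + D\<close> by a Hermitian matrix. So the
  integrand of \<open>A / B\<close> dominates that of \<open>A / (A + B)\<close> pointwise, and integration preserves the
  Loewner order. For integrability: \<open>B \<ge> m > 0\<close> gives \<open>\<parallel>(\<lambda> + B)\<inverse>\<parallel> = O(1 / (\<lambda> + m))\<close>, and the
  resolvent identity makes \<open>\<lambda> \<mapsto> (\<lambda> + B)\<inverse>\<close> Lipschitz, so both integrands are continuous and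
  \<open>O(1 / (\<lambda> + m)\<^sup>2)\<close>.
\<close>

lemma matrix_add_rdistrib: "(B + C) ** A = B ** A + C ** A"
  for A :: "'a::semiring_1^'p^'n" and B C :: "'a^'n^'m"
  by (vector matrix_matrix_mult_def sum.distrib[symmetric] field_simps)

lemma matrix_diff_ldistrib: "A ** (B - C) = A ** B - A ** C"
  for A :: "'a::ring_1^'n^'m" and B C :: "'a^'p^'n"
  by (vector matrix_matrix_mult_def sum_subtractf[symmetric] field_simps)

lemma matrix_diff_rdistrib: "(B - C) ** A = B ** A - C ** A"
  for A :: "'a::ring_1^'p^'n" and B C :: "'a^'n^'m"
  by (vector matrix_matrix_mult_def sum_subtractf[symmetric] field_simps)

lemma bilinear_matrix_matrix_mult:
  "bilinear ((**) :: 'a::real_algebra_1^'n^'m \<Rightarrow> 'a^'p^'n \<Rightarrow> 'a^'p^'m)"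
  by (simp add: bilinear_def linear_iff matrix_add_ldistrib matrix_add_rdistrib
      scalar_matrix_assoc matrix_scalar_ac)

lemma scaleR_matrix_vector_assoc: "(r *\<^sub>R M) *v x = r *\<^sub>R (M *v x)"
  for M :: "'a::real_algebra_1^'n^'m"
  by (simp add: vec_eq_iff matrix_vector_mult_def scaleR_sum_right)

lemma matrix_vector_mult_scaleR_right: "M *v (r *\<^sub>R x) = r *\<^sub>R (M *v x)"
  for M :: "'a::real_algebra_1^'n^'m"
  by (simp add: vec_eq_iff matrix_vector_mult_def scaleR_sum_right)

lemma mat_of_real_eq_scaleR: "(mat (complex_of_real r) :: complex^'n^'n) = r *\<^sub>R mat 1"
  by (auto simp: vec_eq_iff mat_def of_real_def)

lemma matrix_vector_mult_mat_of_real: "(mat (complex_of_real r) :: complex^'n^'n) *v x = r *\<^sub>R x"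
  by (simp add: mat_of_real_eq_scaleR scaleR_matrix_vector_assoc)

lemma matrix_inv_right: "invertible C \<Longrightarrow> C ** matrix_inv C = mat 1"
  and matrix_inv_left: "invertible C \<Longrightarrow> matrix_inv C ** C = mat 1"
  for C :: "'a::semiring_1^'n^'n"
  using someI_ex[of "\<lambda>C'. C ** C' = mat 1 \<and> C' ** C = mat 1"]
  by (auto simp: invertible_def matrix_inv_def)

lemma norm_matrix_le_of_norm_mult_le:
  fixes M :: "complex^'n^'m"
  assumes "\<And>x. norm (M *v x) \<le> K * norm x"
  shows "norm M \<le> real CARD('m) * real CARD('n) * K"
proof -
  have entry: "norm (M $ i $ j) \<le> K" for i j
  proof -
    have "M $ i $ j = (M *v axis j 1) $ i"
      by (simp add: matrix_vector_mult_def axis_def if_distrib cong: if_cong)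
    then have "norm (M $ i $ j) \<le> norm (M *v axis j 1)"
      by (simp add: Finite_Cartesian_Product.norm_nth_le)
    also have "\<dots> \<le> K"
      using assms[of "axis j 1"] by (simp add: inner_axis' norm_eq_1)
    finally show ?thesis .
  qed
  have l1: "norm v \<le> (\<Sum>i\<in>UNIV. norm (v $ i))" for v :: "'b::real_normed_vector^'k"
    unfolding norm_vec_def by (rule L2_set_le_sum) simp
  have "norm M \<le> (\<Sum>i\<in>UNIV. norm (M $ i))"
    by (rule l1)
  also have "\<dots> \<le> (\<Sum>i\<in>UNIV. \<Sum>j\<in>UNIV. norm (M $ i $ j))"
    by (intro sum_mono l1)
  also have "\<dots> \<le> (\<Sum>i\<in>(UNIV::'m set). \<Sum>j\<in>(UNIV::'n set). K)"
    using entry by (intro sum_mono)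
  finally show ?thesis by simp
qed

subsection \<open>Hermitian and positive semidefinite matrices\<close>

lemma conj_transpose_mult: "conj_transpose (P ** Q) = conj_transpose Q ** conj_transpose P"
  for P :: "complex^'n^'m" and Q :: "complex^'p^'n"
  by (simp add: conj_transpose_def matrix_matrix_mult_def vec_eq_iff mult.commute)

lemma conj_transpose_conj_transpose [simp]: "conj_transpose (conj_transpose P) = P"
  by (simp add: conj_transpose_def vec_eq_iff)

lemma conj_transpose_add: "conj_transpose (P + Q) = conj_transpose P + conj_transpose Q"
  by (simp add: conj_transpose_def vec_eq_iff)

lemma conj_transpose_scaleR: "conj_transpose (r *\<^sub>R P) = r *\<^sub>R conj_transpose P"
  by (simp add: conj_transpose_def vec_eq_iff)

lemma conj_transpose_mat: "conj_transpose (mat c :: complex^'n^'n) = mat (cnj c)"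
  by (simp add: conj_transpose_def vec_eq_iff mat_def)

lemma hermitian_add: "hermitian P \<Longrightarrow> hermitian Q \<Longrightarrow> hermitian (P + Q)"
  by (simp add: hermitian_def conj_transpose_add)

lemma hermitian_diff: "hermitian P \<Longrightarrow> hermitian Q \<Longrightarrow> hermitian (P - Q)"
  by (simp add: hermitian_def conj_transpose_def vec_eq_iff)

lemma hermitian_mat_of_real: "hermitian (mat (complex_of_real r))"
  by (simp add: hermitian_def conj_transpose_mat)

lemma hermitian_matrix_inv:
  assumes "invertible C" "hermitian C"
  shows "hermitian (matrix_inv C)"
proof -
  let ?R = "matrix_inv C"
  have left: "conj_transpose ?R ** C = mat 1"
    using conj_transpose_mult[of C ?R] matrix_inv_right[OF assms(1)] assms(2)
    by (simp add: hermitian_def conj_transpose_mat)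
  have "conj_transpose ?R = conj_transpose ?R ** (C ** ?R)"
    using matrix_inv_right[OF assms(1)] by simp
  also have "\<dots> = ?R"
    using left by (simp add: matrix_mul_assoc)
  finally show ?thesis by (simp add: hermitian_def)
qed

lemma Re_quad_form: "Re (quad_form M x) = x \<bullet> (M *v x)"
  by (simp add: quad_form_def inner_vec_def inner_complex_def Re_sum)

lemma psd_iff_inner: "psd M \<longleftrightarrow> hermitian M \<and> (\<forall>x. 0 \<le> x \<bullet> (M *v x))"
  by (simp add: psd_def Re_quad_form)

lemma psd_add: "psd P \<Longrightarrow> psd Q \<Longrightarrow> psd (P + Q)"
  by (simp add: psd_iff_inner hermitian_add matrix_vector_mult_add_rdistrib inner_add_right)

lemma quad_form_conj_transpose_mult:
  fixes X :: "complex^'n^'m" and M :: "complex^'m^'m"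
  shows "quad_form (conj_transpose X ** M ** X) x = quad_form M (X *v x)"
proof -
  define y where "y = M *v (X *v x)"
  have "quad_form (conj_transpose X ** M ** X) x
      = (\<Sum>i\<in>UNIV. cnj (x $ i) * (conj_transpose X *v y) $ i)"
    by (simp add: quad_form_def y_def matrix_vector_mul_assoc matrix_mul_assoc)
  also have "\<dots> = (\<Sum>i\<in>UNIV. \<Sum>j\<in>UNIV. cnj (x $ i) * cnj (X $ j $ i) * y $ j)"
    by (simp add: conj_transpose_def matrix_vector_mult_def sum_distrib_left mult.assoc)
  also have "\<dots> = (\<Sum>j\<in>UNIV. \<Sum>i\<in>UNIV. cnj (x $ i) * cnj (X $ j $ i) * y $ j)"
    by (rule sum.swap)
  also have "\<dots> = quad_form M (X *v x)"
    by (simp add: quad_form_def y_def matrix_vector_mult_def sum_distrib_right mult_ac)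
  finally show ?thesis .
qed

lemma psd_congruence:
  fixes X :: "complex^'n^'m"
  assumes "psd M"
  shows "psd (conj_transpose X ** M ** X)"
  using assms
  by (simp add: psd_def hermitian_def quad_form_conj_transpose_mult conj_transpose_mult
      matrix_mul_assoc)

lemma inverse_sandwich_diff:
  fixes C D RC RD :: "'a::ring_1^'n^'n"
  assumes "RC ** C = mat 1" "C ** RC = mat 1" "RD ** D = mat 1" "D ** RD = mat 1"
  shows "RC ** (D - C) ** RC - RD ** (D - C) ** RD = (RC - RD) ** (C + D) ** (RC - RD)"
proof -
  have cancel: "RC ** (C ** Y) = Y" "C ** (RC ** Y) = Y" "RD ** (D ** Y) = Y" "D ** (RD ** Y) = Y"
    for Y :: "'a^'n^'n"
    using assms by (simp_all add: matrix_mul_assoc)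
  show ?thesis
    by (simp only: matrix_add_ldistrib matrix_add_rdistrib matrix_diff_ldistrib
        matrix_diff_rdistrib matrix_mul_assoc[symmetric])
       (simp add: assms cancel)
qed

lemma loewner_le_inverse_sandwich:
  fixes C D :: "complex^'n^'n"
  assumes "invertible C" "invertible D" "hermitian C" "hermitian D" "psd (C + D)"
  shows "loewner_le (matrix_inv D ** (D - C) ** matrix_inv D)
                    (matrix_inv C ** (D - C) ** matrix_inv C)"
proof -
  let ?X = "matrix_inv C - matrix_inv D"
  have "hermitian ?X"
    using assms by (intro hermitian_diff hermitian_matrix_inv)
  then have "psd (?X ** (C + D) ** ?X)"
    using psd_congruence[OF assms(5), of ?X] by (simp add: hermitian_def)
  then show ?thesis
    unfolding loewner_le_def
    by (simp add: inverse_sandwich_diff matrix_inv_left matrix_inv_right assms(1,2))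
qed

lemma psd_integral:
  fixes h :: "real \<Rightarrow> complex^'n^'n"
  assumes int: "h integrable_on S" and psd: "\<And>l. l \<in> S \<Longrightarrow> psd (h l)"
  shows "psd (integral S h)"
  unfolding psd_iff_inner
proof (intro conjI allI)
  have "bounded_linear (conj_transpose :: complex^'n^'n \<Rightarrow> complex^'n^'n)"
    by (intro bounded_linearI') (simp_all add: conj_transpose_add conj_transpose_scaleR)
  then have "conj_transpose (integral S h) = integral S (conj_transpose \<circ> h)"
    by (rule integral_linear[OF int, symmetric])
  also have "\<dots> = integral S h"
    by (rule integral_cong) (use psd in \<open>auto simp: psd_def hermitian_def\<close>)
  finally show "hermitian (integral S h)" by (simp add: hermitian_def)
next
  fix x :: "complex^'n"
  let ?q = "\<lambda>M::complex^'n^'n. x \<bullet> (M *v x)"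
  have q: "bounded_linear ?q"
    by (intro bounded_linearI')
       (simp_all add: matrix_vector_mult_add_rdistrib inner_add_right scaleR_matrix_vector_assoc)
  have "?q (integral S h) = integral S (?q \<circ> h)"
    by (rule integral_linear[OF int q, symmetric])
  also have "\<dots> \<ge> 0"
    by (rule integral_nonneg[OF integrable_linear[OF int q]])
       (use psd in \<open>auto simp: psd_iff_inner\<close>)
  finally show "0 \<le> ?q (integral S h)" .
qed

lemma loewner_le_integral:
  fixes f g :: "real \<Rightarrow> complex^'n^'n"
  assumes "f integrable_on S" "g integrable_on S" "\<And>l. l \<in> S \<Longrightarrow> loewner_le (f l) (g l)"
  shows "loewner_le (integral S f) (integral S g)"
  using psd_integral[OF integrable_diff[OF assms(2,1)]] assms(3)
  by (simp add: loewner_le_def integral_diff[OF assms(2,1)])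

subsection \<open>Coercive matrices\<close>

definition coercive :: "complex^'n^'n \<Rightarrow> real \<Rightarrow> bool" where
  "coercive C m \<longleftrightarrow> (\<forall>x. m * (norm x)\<^sup>2 \<le> x \<bullet> (C *v x))"

lemma coercive_shift: "coercive C m \<Longrightarrow> coercive (mat (complex_of_real l) + C) (l + m)"
  by (simp add: coercive_def matrix_vector_mult_add_rdistrib matrix_vector_mult_mat_of_real
      inner_add_right dot_square_norm algebra_simps)

lemma coercive_add_psd: "psd A \<Longrightarrow> coercive C m \<Longrightarrow> coercive (A + C) m"
  by (auto simp: coercive_def psd_iff_inner matrix_vector_mult_add_rdistrib inner_add_right
      intro: add_increasing)

lemma coercive_imp_psd: "hermitian C \<Longrightarrow> 0 \<le> m \<Longrightarrow> coercive C m \<Longrightarrow> psd C"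
  by (auto simp: psd_iff_inner coercive_def intro: order_trans[rotated])

lemma pd_imp_coercive:
  assumes "pd B"
  obtains m where "m > 0" "coercive B m"
proof -
  let ?q = "\<lambda>x. x \<bullet> (B *v x)"
  have "continuous_on (sphere 0 1) ?q"
    by (intro continuous_intros linear_continuous_on matrix_vector_mul_bounded_linear)
  moreover have "sphere (0::complex^'n) 1 \<noteq> {}"
    by simp
  ultimately obtain u where u: "u \<in> sphere 0 1" "\<And>y. y \<in> sphere 0 1 \<Longrightarrow> ?q u \<le> ?q y"
    using continuous_attains_inf[OF compact_sphere] by blast
  have "u \<noteq> 0"
    using u(1) by auto
  then have "0 < ?q u"
    using assms by (simp add: pd_def Re_quad_form[symmetric])
  moreover have "?q u * (norm x)\<^sup>2 \<le> ?q x" for x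
  proof (cases "x = 0")
    case False
    define v where "v = x /\<^sub>R norm x"
    have "x = norm x *\<^sub>R v"
      using False by (simp add: v_def)
    then have "?q x = (norm x)\<^sup>2 * ?q v"
      by (metis inner_scaleR_left inner_scaleR_right matrix_vector_mult_scaleR_right
          power2_eq_square mult.assoc)
    moreover have "v \<in> sphere 0 1"
      using False by (simp add: v_def)
    then have "?q u \<le> ?q v"
      using u(2) by blast
    ultimately show ?thesis
      by (metis mult.commute mult_right_mono zero_le_power2)
  qed simp
  ultimately show ?thesis
    using that by (auto simp: coercive_def)
qed

lemma coercive_imp_invertible:
  assumes m_pos: "m > 0" and coercive: "coercive C m"
  shows "invertible C"
proof -
  have "x = 0" if "C *v x = 0" for x
  proof -
    have "m * (norm x)\<^sup>2 \<le> 0"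
      using coercive[unfolded coercive_def, rule_format, of x] that by simp
    then show ?thesis
      using m_pos by (simp add: mult_le_0_iff)
  qed
  then show ?thesis
    using matrix_left_invertible_ker invertible_left_inverse by blast
qed

lemma norm_matrix_inv_mult_le:
  assumes m_pos: "m > 0" and coercive: "coercive C m"
  shows "norm (matrix_inv C *v x) \<le> norm x / m"
proof -
  define y where "y = matrix_inv C *v x"
  have "C *v y = x"
    using matrix_inv_right[OF coercive_imp_invertible[OF assms]] by (simp add: y_def matrix_vector_mul_assoc)
  have "m * (norm y)\<^sup>2 \<le> y \<bullet> (C *v y)"
    using coercive by (simp add: coercive_def)
  also have "\<dots> = y \<bullet> x"
    using \<open>C *v y = x\<close> by simp
  also have "\<dots> \<le> norm y * norm x"
    by (rule norm_cauchy_schwarz)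
  finally have "m * norm y \<le> norm x"
    by (cases "y = 0") (auto simp: power2_eq_square)
  then show ?thesis
    using m_pos by (simp add: y_def field_simps)
qed

subsection \<open>The resolvent of a coercive matrix\<close>

definition resolvent :: "complex^'n^'n \<Rightarrow> real \<Rightarrow> complex^'n^'n" where
  "resolvent C l = matrix_inv (mat (complex_of_real l) + C)"

lemma mat_quot_eq_integral_resolvent:
  "mat_quot X C = integral {0..} (\<lambda>l. resolvent C l ** X ** resolvent C l)"
  by (simp add: mat_quot_def resolvent_def)

lemma resolvent_identity:
  assumes "invertible (mat (complex_of_real l) + C)" "invertible (mat (complex_of_real l') + C)"
  shows "resolvent C l - resolvent C l' = (l' - l) *\<^sub>R (resolvent C l ** resolvent C l')"
proof -
  let ?R = "resolvent C l" and ?R' = "resolvent C l'"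
  have shift: "mat (complex_of_real l') + C = (mat (complex_of_real l) + C) + (l' - l) *\<^sub>R mat 1"
    by (simp add: mat_of_real_eq_scaleR algebra_simps)
  have "?R = ?R ** ((mat (complex_of_real l') + C) ** ?R')"
    using matrix_inv_right[OF assms(2)] by (simp add: resolvent_def)
  also have "\<dots> = (mat 1 + (l' - l) *\<^sub>R ?R) ** ?R'"
    using matrix_inv_left[OF assms(1)]
    by (simp add: shift matrix_mul_assoc matrix_add_ldistrib matrix_scalar_ac resolvent_def)
  also have "\<dots> = ?R' + (l' - l) *\<^sub>R (?R ** ?R')"
    by (simp add: matrix_add_rdistrib scalar_matrix_assoc)
  finally show ?thesis
    by (metis add_diff_cancel_left')
qed

lemma has_integral_inverse_square_shift:
  fixes m :: real
  assumes m: "m > 0"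
  shows "((\<lambda>x. 1 / (x + m)\<^sup>2) has_integral (1 / m)) {0..}"
proof (rule has_integral_to_inf)
  have fi: "((\<lambda>x. 1 / (x + m)\<^sup>2) has_integral (1/m - 1/(y + m))) {0..y}" if "y \<ge> 0" for y
  proof -
    have "((\<lambda>x. 1 / (x + m)\<^sup>2) has_integral ((-1/(y + m)) - (-1/(0 + m)))) {0..y}"
      using that m
      by (intro fundamental_theorem_of_calculus)
         (auto intro!: derivative_eq_intros simp flip: has_real_derivative_iff_has_vector_derivative
               simp: power2_eq_square field_simps)
    then show ?thesis by simp
  qed
  show "(\<lambda>x. 1 / (x + m)\<^sup>2) integrable_on {0..y}" for y
    using fi by (cases "y \<ge> 0") (auto simp: integrable_on_empty)
  have "\<forall>\<^sub>F y in at_top. integral {0..y} (\<lambda>x. 1 / (x + m)\<^sup>2) = 1/m - 1/(y + m)"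
    using fi by (meson eventually_at_top_linorderI integral_unique)
  moreover have "((\<lambda>y::real. 1/m - 1/(y + m)) \<longlongrightarrow> 1/m) at_top"
    by real_asymp
  ultimately show "((\<lambda>y. integral {0..y} (\<lambda>x. 1 / (x + m)\<^sup>2)) \<longlongrightarrow> 1/m) at_top"
    by (simp add: tendsto_cong)
qed (use m in auto)

context
  fixes C :: "complex^'n^'n" and m :: real
  assumes m_pos: "m > 0" and coercive: "coercive C m"
begin

lemma invertible_shift: "l \<ge> 0 \<Longrightarrow> invertible (mat (complex_of_real l) + C)"
  using coercive_imp_invertible[OF _ coercive_shift[OF coercive]] m_pos by simp

lemma norm_resolvent_le:
  assumes "l \<ge> 0"
  shows "norm (resolvent C l) \<le> real CARD('n) * real CARD('n) / (l + m)"
proof -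
  have "norm (resolvent C l *v x) \<le> 1 / (l + m) * norm x" for x
    using norm_matrix_inv_mult_le[OF _ coercive_shift[OF coercive]] m_pos assms
    by (simp add: resolvent_def)
  then show ?thesis
    using norm_matrix_le_of_norm_mult_le by fastforce
qed

lemma continuous_on_resolvent: "continuous_on {0..} (resolvent C)"
proof -
  obtain K where K: "K > 0"
    "\<And>(P :: complex^'n^'n) (Q :: complex^'n^'n). norm (P ** Q) \<le> K * norm P * norm Q"
    using bilinear_bounded_pos[OF bilinear_matrix_matrix_mult] by blast
  define c where "c = real CARD('n) * real CARD('n)"
  have bound: "norm (resolvent C l) \<le> c / m" if "l \<ge> 0" for l
  proof -
    have "c / (l + m) \<le> c / m"
      using that m_pos by (intro frac_le) (auto simp: c_def)
    then show ?thesis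
      using norm_resolvent_le[OF that] by (simp add: c_def)
  qed
  have "(K * (c / m) * (c / m))-lipschitz_on {0..} (resolvent C)"
  proof (rule lipschitz_onI)
    fix l l' :: real
    assume "l \<in> {0..}" "l' \<in> {0..}"
    then have "norm (resolvent C l - resolvent C l') = \<bar>l - l'\<bar> * norm (resolvent C l ** resolvent C l')"
      by (simp add: resolvent_identity invertible_shift abs_minus_commute)
    also have "\<dots> \<le> \<bar>l - l'\<bar> * (K * norm (resolvent C l) * norm (resolvent C l'))"
      using K(2) by (rule mult_left_mono) simp
    also have "\<dots> \<le> \<bar>l - l'\<bar> * (K * (c / m) * (c / m))"
      using K(1) m_pos \<open>l \<in> {0..}\<close> \<open>l' \<in> {0..}\<close> bound
      by (intro mult_left_mono mult_mono) (auto simp: c_def)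
    finally show "dist (resolvent C l) (resolvent C l') \<le> K * (c / m) * (c / m) * dist l l'"
      by (simp add: dist_norm dist_real_def mult.commute)
  qed (use K m_pos in \<open>simp add: c_def\<close>)
  then show ?thesis
    by (rule lipschitz_on_continuous_on)
qed

lemma resolvent_sandwich_integrable:
  "(\<lambda>l. resolvent C l ** X ** resolvent C l) integrable_on {0..}"
proof -
  obtain K where K: "K > 0"
    "\<And>(P :: complex^'n^'n) (Q :: complex^'n^'n). norm (P ** Q) \<le> K * norm P * norm Q"
    using bilinear_bounded_pos[OF bilinear_matrix_matrix_mult] by blast
  define c where "c = K * K * norm X * (real CARD('n) * real CARD('n))\<^sup>2"
  have "norm (resolvent C l ** X ** resolvent C l) \<le> c * (1 / (l + m)\<^sup>2)" if "l \<ge> 0" for l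
  proof -
    have "norm (resolvent C l ** X ** resolvent C l)
        \<le> K * norm (resolvent C l ** X) * norm (resolvent C l)"
      by (rule K(2))
    also have "\<dots> \<le> K * (K * norm (resolvent C l) * norm X) * norm (resolvent C l)"
      using K by (intro mult_right_mono mult_left_mono) auto
    also have "\<dots> = K * K * norm X * (norm (resolvent C l))\<^sup>2"
      by (simp add: power2_eq_square)
    also have "\<dots> \<le> K * K * norm X * (real CARD('n) * real CARD('n) / (l + m))\<^sup>2"
      using K norm_resolvent_le[OF that] by (intro mult_left_mono power_mono) auto
    finally show ?thesis
      by (simp add: c_def power_divide)
  qed
  moreover have "continuous_on {0..} (\<lambda>l. resolvent C l ** X ** resolvent C l)"
    by (intro bilinear_continuous_on_compose[OF _ _ bilinear_matrix_matrix_mult]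
        continuous_on_resolvent continuous_on_const)
  ultimately have "(\<lambda>l. resolvent C l ** X ** resolvent C l) absolutely_integrable_on {0..}"
    using integrable_cmul[OF has_integral_integrable[OF has_integral_inverse_square_shift[OF m_pos]]]
    by (intro measurable_bounded_by_integrable_imp_absolutely_integrable
        continuous_imp_measurable_on_sets_lebesgue) auto
  then show ?thesis
    by (simp add: absolutely_integrable_on_def)
qed

end

lemma loewner_le_resolvent_sandwich:
  assumes "psd A" "pd B" "l \<ge> 0"
  shows "loewner_le (resolvent (A + B) l ** A ** resolvent (A + B) l)
                    (resolvent B l ** A ** resolvent B l)"
proof -
  obtain m where m: "m > 0" "coercive B m"
    using pd_imp_coercive[OF assms(2)] .
  define C where "C = mat (complex_of_real l) + B"
  define D where "D = mat (complex_of_real l) + (A + B)"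
  have lm: "l + m > 0"
    using assms(3) m(1) by simp
  have cC: "coercive C (l + m)" and cD: "coercive D (l + m)"
    using coercive_shift[OF m(2)] coercive_shift[OF coercive_add_psd[OF assms(1) m(2)]]
    by (simp_all add: C_def D_def)
  have hC: "hermitian C" and hD: "hermitian D"
    using assms(1,2)
    by (auto simp: C_def D_def psd_def pd_def intro!: hermitian_add hermitian_mat_of_real)
  have "psd (C + D)"
    using coercive_imp_psd[OF hC _ cC] coercive_imp_psd[OF hD _ cD] lm by (simp add: psd_add)
  moreover have "invertible C" "invertible D"
    using coercive_imp_invertible[OF lm] cC cD by auto
  moreover have "D - C = A"
    by (simp add: C_def D_def)
  ultimately show ?thesis
    using loewner_le_inverse_sandwich[OF _ _ hC hD] by (simp add: resolvent_def C_def D_def)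
qed

theorem mainTheorem3:
  fixes A B :: "complex^'n^'n"
  assumes "psd A" and "pd B"
  shows "loewner_le (mat_quot A (A + B)) (mat_quot A B)"
proof -
  obtain m where m: "m > 0" "coercive B m"
    using pd_imp_coercive[OF assms(2)] .
  have "coercive (A + B) m"
    using coercive_add_psd[OF assms(1) m(2)] .
  then have "(\<lambda>l. resolvent (A + B) l ** A ** resolvent (A + B) l) integrable_on {0..}"
    using resolvent_sandwich_integrable m(1) by blast
  moreover have "(\<lambda>l. resolvent B l ** A ** resolvent B l) integrable_on {0..}"
    using resolvent_sandwich_integrable m by blast
  ultimately show ?thesis
    unfolding mat_quot_eq_integral_resolvent
    by (rule loewner_le_integral) (simp add: loewner_le_resolvent_sandwich assms)
qed

end
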